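(* Every set strongly star Hurewicz space $X$ that is hereditarily metacompact (every subspace of $X$ is metacompact) is a Hurewicz space.
   Context: For a subset $A$ of a space $X$ and a collection $\mathcal{U}$ of subsets of $X$, ${\rm St}(A,\mathcal{U}) = \bigcup\{U \in \mathcal{U}: U \cap A \neq \emptyset\}$. A space is metacompact if every open cover has a point-finite open refinement. A space $X$ is Hurewicz if for each sequence $(\mathcal{U}_n: n \in \mathbb{N})$ of open covers of $X$ there are finite $\mathcal{V}_n \subset \mathcal{U}_n$ such that each $x \in X$ lies in $\bigcup\mathcal{V}_n$ for all but finitely many $n$. $X$ is set strongly star Hurewicz if for each nonempty $A \subset X$ and each sequence $(\mathcal{U}_n: n\in\mathbb{N})$ of collections of sets open in $X$ with $\overline{A} \subset \bigcup\mathcal{U}_n$ for all $n$, there are finite sets $F_n \subset \overline{A}$ such that each $x \in A$ lies in ${\rm St}(F_n,\mathcal{U}_n)$ for all but finitely many $n$. *)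

theory Defs
  imports "HOL-Analysis.Analysis"
begin

definition St :: "'a set \<Rightarrow> 'a set set \<Rightarrow> 'a set" where
  "St A \<U> = \<Union>{U \<in> \<U>. U \<inter> A \<noteq> {}}"

definition metacompact :: "'a topology \<Rightarrow> bool" where
  "metacompact X \<longleftrightarrow>
    (\<forall>\<U>. (\<forall>U\<in>\<U>. openin X U) \<and> \<Union>\<U> = topspace X \<longrightarrow>
      (\<exists>\<V>. (\<forall>V\<in>\<V>. openin X V) \<and> \<Union>\<V> = topspace X \<and>
            (\<forall>V\<in>\<V>. \<exists>U\<in>\<U>. V \<subseteq> U) \<and>
            (\<forall>x\<in>topspace X. finite {V\<in>\<V>. x \<in> V})))"

definition hereditarily_metacompact :: "'a topology \<Rightarrow> bool" where
  "hereditarily_metacompact X \<longleftrightarrow> (\<forall>S. S \<subseteq> topspace X \<longrightarrow> metacompact (subtopology X S))"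

definition Hurewicz :: "'a topology \<Rightarrow> bool" where
  "Hurewicz X \<longleftrightarrow>
    (\<forall>\<U> :: nat \<Rightarrow> 'a set set.
       (\<forall>n. (\<forall>U\<in>\<U> n. openin X U) \<and> \<Union>(\<U> n) = topspace X) \<longrightarrow>
       (\<exists>\<V>. (\<forall>n. finite (\<V> n) \<and> \<V> n \<subseteq> \<U> n) \<and>
             (\<forall>x\<in>topspace X. eventually (\<lambda>n. x \<in> \<Union>(\<V> n)) sequentially)))"

definition set_strongly_star_Hurewicz :: "'a topology \<Rightarrow> bool" where
  "set_strongly_star_Hurewicz X \<longleftrightarrow>
    (\<forall>A \<U>. A \<noteq> {} \<and> A \<subseteq> topspace X \<and>
       (\<forall>n::nat. (\<forall>U\<in>\<U> n. openin X U) \<and> X closure_of A \<subseteq> \<Union>(\<U> n)) \<longrightarrow>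
       (\<exists>F. (\<forall>n. finite (F n) \<and> F n \<subseteq> X closure_of A) \<and>
            (\<forall>x\<in>A. eventually (\<lambda>n. x \<in> St (F n) (\<U> n)) sequentially)))"

end

theory Submission
  imports Defs
begin

text \<open>Refine each open cover \<open>\<U> n\<close> to a point-finite open cover \<open>\<V> n\<close> and apply the set
  strongly star Hurewicz property to \<open>A = X\<close> and the refinements, obtaining finite sets
  \<open>F n\<close> whose stars eventually contain every point. Since \<open>\<V> n\<close> is point-finite, only
  finitely many of its members meet the finite set \<open>F n\<close>; choosing for each of them a member
  of \<open>\<U> n\<close> containing it yields a finite \<open>\<W> n \<subseteq> \<U> n\<close> with \<open>St (F n) (\<V> n) \<subseteq> \<Union>(\<W> n)\<close>.\<close>

lemma hereditarily_metacompact_imp_metacompact: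
  "hereditarily_metacompact X \<Longrightarrow> metacompact X"
  unfolding hereditarily_metacompact_def by (metis order_refl subtopology_topspace)

lemma metacompact_point_finite_refinements:
  assumes "metacompact X"
    and "\<forall>n. (\<forall>U\<in>\<U> n. openin X U) \<and> \<Union>(\<U> n) = topspace X"
  shows "\<exists>\<V>. \<forall>n. (\<forall>V\<in>\<V> n. openin X V) \<and> \<Union>(\<V> n) = topspace X \<and>
      (\<forall>V\<in>\<V> n. \<exists>U\<in>\<U> n. V \<subseteq> U) \<and> (\<forall>x\<in>topspace X. finite {V\<in>\<V> n. x \<in> V})"
proof (rule choice, rule allI)
  fix n
  show "\<exists>\<V>. (\<forall>V\<in>\<V>. openin X V) \<and> \<Union>\<V> = topspace X \<and> (\<forall>V\<in>\<V>. \<exists>U\<in>\<U> n. V \<subseteq> U) \<and>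
      (\<forall>x\<in>topspace X. finite {V\<in>\<V>. x \<in> V})"
    using assms unfolding metacompact_def by simp
qed

lemma set_strongly_star_Hurewicz_topspace:
  assumes "set_strongly_star_Hurewicz X"
    and "\<forall>n. (\<forall>V\<in>\<V> n. openin X V) \<and> \<Union>(\<V> n) = topspace X"
  shows "\<exists>F. (\<forall>n. finite (F n) \<and> F n \<subseteq> topspace X) \<and>
    (\<forall>x\<in>topspace X. eventually (\<lambda>n. x \<in> St (F n) (\<V> n)) sequentially)"
proof (cases "topspace X = {}")
  case True
  then show ?thesis
    by (intro exI[of _ "\<lambda>n. {}"]) simp
next
  case False
  have "\<forall>n. (\<forall>V\<in>\<V> n. openin X V) \<and> X closure_of topspace X \<subseteq> \<Union>(\<V> n)"
    using assms(2) by simp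
  then show ?thesis
    using assms(1)[unfolded set_strongly_star_Hurewicz_def, rule_format, of "topspace X" \<V>] False
    by simp
qed

lemma finite_members_meeting_finite_set:
  assumes "finite F" and "\<And>x. x \<in> F \<Longrightarrow> finite {V\<in>\<V>. x \<in> V}"
  shows "finite {V\<in>\<V>. V \<inter> F \<noteq> {}}"
proof -
  have "{V\<in>\<V>. V \<inter> F \<noteq> {}} = (\<Union>x\<in>F. {V\<in>\<V>. x \<in> V})"
    by blast
  then show ?thesis
    using assms by simp
qed

lemma St_point_finite_refinement_finite_cover:
  assumes "finite F" and "\<And>x. x \<in> F \<Longrightarrow> finite {V\<in>\<V>. x \<in> V}"
    and "\<forall>V\<in>\<V>. \<exists>U\<in>\<U>. V \<subseteq> U"
  shows "\<exists>\<W>. finite \<W> \<and> \<W> \<subseteq> \<U> \<and> St F \<V> \<subseteq> \<Union>\<W>"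
proof -
  obtain g where g: "\<And>V. V \<in> \<V> \<Longrightarrow> g V \<in> \<U> \<and> V \<subseteq> g V"
    using assms(3) by metis
  let ?\<W> = "g ` {V\<in>\<V>. V \<inter> F \<noteq> {}}"
  have "finite ?\<W>"
    using finite_members_meeting_finite_set[OF assms(1,2)] by simp
  moreover have "?\<W> \<subseteq> \<U>" "St F \<V> \<subseteq> \<Union>?\<W>"
    using g unfolding St_def by blast+
  ultimately show ?thesis
    by blast
qed

theorem mainTheorem3:
  fixes X :: "'a topology"
  assumes "set_strongly_star_Hurewicz X"
    and "hereditarily_metacompact X"
  shows "Hurewicz X"
  unfolding Hurewicz_def
proof (intro allI impI)
  fix \<U> :: "nat \<Rightarrow> 'a set set"
  assume U_cover: "\<forall>n. (\<forall>U\<in>\<U> n. openin X U) \<and> \<Union>(\<U> n) = topspace X"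
  obtain \<V> where V: "\<forall>n. (\<forall>V\<in>\<V> n. openin X V) \<and> \<Union>(\<V> n) = topspace X \<and>
      (\<forall>V\<in>\<V> n. \<exists>U\<in>\<U> n. V \<subseteq> U) \<and> (\<forall>x\<in>topspace X. finite {V\<in>\<V> n. x \<in> V})"
    using metacompact_point_finite_refinements[OF
        hereditarily_metacompact_imp_metacompact[OF assms(2)] U_cover] ..
  then obtain F where F: "\<forall>n. finite (F n) \<and> F n \<subseteq> topspace X"
    and F_star: "\<forall>x\<in>topspace X. eventually (\<lambda>n. x \<in> St (F n) (\<V> n)) sequentially"
    using set_strongly_star_Hurewicz_topspace[OF assms(1), of \<V>] by auto
  have "\<forall>n. \<exists>\<W>. finite \<W> \<and> \<W> \<subseteq> \<U> n \<and> St (F n) (\<V> n) \<subseteq> \<Union>\<W>"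
  proof
    fix n
    have "finite {V\<in>\<V> n. x \<in> V}" if "x \<in> F n" for x
      using that F V by blast
    then show "\<exists>\<W>. finite \<W> \<and> \<W> \<subseteq> \<U> n \<and> St (F n) (\<V> n) \<subseteq> \<Union>\<W>"
      using F V by (intro St_point_finite_refinement_finite_cover) auto
  qed
  then obtain \<W> where W: "\<forall>n. finite (\<W> n) \<and> \<W> n \<subseteq> \<U> n \<and> St (F n) (\<V> n) \<subseteq> \<Union>(\<W> n)"
    by (rule choice[THEN exE])
  have "eventually (\<lambda>n. x \<in> \<Union>(\<W> n)) sequentially" if "x \<in> topspace X" for x
    using F_star[rule_format, OF that] by (rule eventually_mono) (use W in blast)
  with W show "\<exists>\<W>. (\<forall>n. finite (\<W> n) \<and> \<W> n \<subseteq> \<U> n) \<and>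
      (\<forall>x\<in>topspace X. eventually (\<lambda>n. x \<in> \<Union>(\<W> n)) sequentially)"
    by blast
qed

end
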